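(* Let $d$ be even and let $T:\mathcal{M}_d\to\mathcal{M}_d$ be a quantum channel (linear, completely positive, trace-preserving) which is $O(d)$-covariant, i.e. $T(O\rho O^T)=O\,T(\rho)\,O^T$ for all $\rho\in\mathcal{M}_d$ and all real orthogonal $O\in\mathcal{M}_d$. Then $T$ is a mixture of unitary channels: $T(\rho)=\sum_ip_iU_i\rho U_i^\dagger$ for some probabilities $p_i$ and unitaries $U_i$. *)

theory Defs
  imports "HOL-Analysis.Analysis" "HOL-Library.Complex_Order"
begin

text \<open>d x d complex matrices are modelled as complex^'n^'n with d = CARD('n).\<close>

definition cmat_adj :: "complex^'n^'n \<Rightarrow> complex^'n^'n" where
  "cmat_adj A = (\<chi> i j. cnj (A $ j $ i))"

definition cmat_scale :: "complex \<Rightarrow> complex^'n^'n \<Rightarrow> complex^'n^'n" where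
  "cmat_scale c A = (\<chi> i j. c * A $ i $ j)"

definition cinner :: "complex^'n \<Rightarrow> complex^'n \<Rightarrow> complex" where
  "cinner u w = (\<Sum>a\<in>UNIV. cnj (u $ a) * w $ a)"

definition cunitary :: "complex^'n^'n \<Rightarrow> bool" where
  "cunitary U \<longleftrightarrow> U ** cmat_adj U = mat 1 \<and> cmat_adj U ** U = mat 1"

definition real_orthogonal :: "complex^'n^'n \<Rightarrow> bool" where
  "real_orthogonal Q \<longleftrightarrow> (\<forall>i j. Im (Q $ i $ j) = 0) \<and> Q ** transpose Q = mat 1"

definition clinear_map :: "(complex^'n^'n \<Rightarrow> complex^'n^'n) \<Rightarrow> bool" where
  "clinear_map T \<longleftrightarrow> (\<forall>A B. T (A + B) = T A + T B) \<and> (\<forall>c A. T (cmat_scale c A) = cmat_scale c (T A))"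

text \<open>A k x k block matrix with d x d blocks X i j (i, j < k), i.e. an element of
  M_k(M_d) = M_k \<otimes> M_d, is positive semidefinite.\<close>
definition block_psd :: "nat \<Rightarrow> (nat \<Rightarrow> nat \<Rightarrow> complex^'n^'n) \<Rightarrow> bool" where
  "block_psd k X \<longleftrightarrow> (\<forall>v :: nat \<Rightarrow> complex^'n.
      0 \<le> (\<Sum>i<k. \<Sum>j<k. cinner (v i) (X i j *v v j)))"

text \<open>Complete positivity: id_k \<otimes> T is positive for every k.\<close>
definition completely_positive :: "(complex^'n^'n \<Rightarrow> complex^'n^'n) \<Rightarrow> bool" where
  "completely_positive T \<longleftrightarrow>
     (\<forall>k X. block_psd k X \<longrightarrow> block_psd k (\<lambda>i j. T (X i j)))"

definition trace_preserving :: "(complex^'n^'n \<Rightarrow> complex^'n^'n) \<Rightarrow> bool" where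
  "trace_preserving T \<longleftrightarrow> (\<forall>\<rho>. trace (T \<rho>) = trace \<rho>)"

definition quantum_channel :: "(complex^'n^'n \<Rightarrow> complex^'n^'n) \<Rightarrow> bool" where
  "quantum_channel T \<longleftrightarrow> clinear_map T \<and> completely_positive T \<and> trace_preserving T"

end

theory Submission
  imports Defs
begin

text \<open>Conjugation by signed permutation matrices, which are real orthogonal, forces \<open>T (E\<^sub>i\<^sub>j)\<close>
  to live on \<open>E\<^sub>i\<^sub>j\<close> and \<open>E\<^sub>j\<^sub>i\<close> (on the diagonal when \<open>i = j\<close>) with coefficients that do not
  depend on \<open>i, j\<close>. Hence \<open>T\<close> acts as \<open>a \<rho>\<^sub>p\<^sub>q + b \<rho>\<^sub>q\<^sub>p\<close> off the diagonal and as
  \<open>c\<^sub>0 \<rho>\<^sub>p\<^sub>p + c\<^sub>1 (tr \<rho> - \<rho>\<^sub>p\<^sub>p)\<close> on it. Complete positivity makes the four numbers real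
  with \<open>a \<le> c\<^sub>0\<close>, \<open>0 \<le> c\<^sub>0 + (d - 1) a\<close>, \<open>\<bar>b\<bar> \<le> c\<^sub>1\<close>, and trace preservation gives
  \<open>c\<^sub>0 + (d - 1) c\<^sub>1 = 1\<close>.

  Every such map is a positive combination of unitary conjugations by monomial matrices.
  Averaging the diagonal unitaries \<open>diag (\<omega>\<^sup>j\<^sup>k)\<^sub>k\<close>, \<open>\<omega>\<close> a primitive \<open>d\<close>-th root of unity,
  over \<open>j\<close> deletes the off-diagonal part. For the remaining part one uses a 1-factorisation of
  the complete graph on \<open>d\<close> vertices, which exists because \<open>d\<close> is even: conjugating by the
  permutation of a perfect matching, dephased along its pairs, and averaging keeps exactly the
  entries within the pairs; every pair lies in exactly one matching, so the sum over all matchings has diagonal \<open>tr \<rho> - \<rho>\<^sub>p\<^sub>p\<close>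
  and off-diagonal entries \<open>\<plusminus>\<rho>\<^sub>q\<^sub>p\<close>, the sign being set by a phase \<open>\<plusminus>1\<close> on one endpoint of
  each pair.\<close>

section \<open>Mixtures of unitary conjugations\<close>

lemma cmat_scale_component [simp]: "cmat_scale c A $ i $ j = c * A $ i $ j"
  by (simp add: cmat_scale_def)

definition unitary_mixture :: "real \<Rightarrow> (complex^'n^'n \<Rightarrow> complex^'n^'n) \<Rightarrow> bool" where
  "unitary_mixture w T \<longleftrightarrow> (\<exists>m (p :: nat \<Rightarrow> real) U.
     (\<forall>i<m. 0 \<le> p i \<and> cunitary (U i)) \<and> (\<Sum>i<m. p i) = w \<and>
     T = (\<lambda>\<rho>. \<Sum>i<m. cmat_scale (complex_of_real (p i)) (U i ** \<rho> ** cmat_adj (U i))))"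

lemma unitary_mixtureI:
  fixes p :: "'a \<Rightarrow> real" and U :: "'a \<Rightarrow> complex^'n^'n"
  assumes "finite S" and "\<And>x. x \<in> S \<Longrightarrow> 0 \<le> p x \<and> cunitary (U x)"
    and "(\<Sum>x\<in>S. p x) = w"
    and "\<And>\<rho>. T \<rho> = (\<Sum>x\<in>S. cmat_scale (complex_of_real (p x)) (U x ** \<rho> ** cmat_adj (U x)))"
  shows "unitary_mixture w T"
proof -
  obtain h where h: "bij_betw h {..<card S} S"
    using ex_bij_betw_nat_finite[OF assms(1)] by (auto simp: atLeast0LessThan)
  have "h i \<in> S" if "i < card S" for i
    using h that by (auto simp: bij_betw_def)
  with assms(2) have "\<forall>i<card S. 0 \<le> (p \<circ> h) i \<and> cunitary ((U \<circ> h) i)"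
    by auto
  moreover have "(\<Sum>i<card S. (p \<circ> h) i) = w"
    using sum.reindex_bij_betw[OF h, of p] assms(3) by simp
  moreover have "T \<rho> = (\<Sum>i<card S. cmat_scale (complex_of_real ((p \<circ> h) i))
      ((U \<circ> h) i ** \<rho> ** cmat_adj ((U \<circ> h) i)))" for \<rho>
    using sum.reindex_bij_betw[OF h,
        of "\<lambda>x. cmat_scale (complex_of_real (p x)) (U x ** \<rho> ** cmat_adj (U x))"] assms(4)
    by simp
  ultimately show ?thesis
    unfolding unitary_mixture_def
    by (intro exI[of _ "card S"] exI[of _ "p \<circ> h"] exI[of _ "U \<circ> h"]) auto
qed

lemma unitary_mixture_add:
  fixes T1 T2 :: "complex^'n^'n \<Rightarrow> complex^'n^'n"
  assumes "unitary_mixture w1 T1" and "unitary_mixture w2 T2"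
  shows "unitary_mixture (w1 + w2) (\<lambda>\<rho>. T1 \<rho> + T2 \<rho>)"
proof -
  obtain m1 p1 and U1 :: "nat \<Rightarrow> complex^'n^'n" where
    1: "\<forall>i<m1. 0 \<le> p1 i \<and> cunitary (U1 i)" "(\<Sum>i<m1. p1 i) = w1"
       "T1 = (\<lambda>\<rho>. \<Sum>i<m1. cmat_scale (complex_of_real (p1 i)) (U1 i ** \<rho> ** cmat_adj (U1 i)))"
    using assms(1) unfolding unitary_mixture_def by blast
  obtain m2 p2 and U2 :: "nat \<Rightarrow> complex^'n^'n" where
    2: "\<forall>i<m2. 0 \<le> p2 i \<and> cunitary (U2 i)" "(\<Sum>i<m2. p2 i) = w2"
       "T2 = (\<lambda>\<rho>. \<Sum>i<m2. cmat_scale (complex_of_real (p2 i)) (U2 i ** \<rho> ** cmat_adj (U2 i)))"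
    using assms(2) unfolding unitary_mixture_def by blast
  show ?thesis
    by (rule unitary_mixtureI[where S = "{..<m1} <+> {..<m2}"
          and p = "case_sum p1 p2" and U = "case_sum U1 U2"])
      (use 1 2 in \<open>auto simp: sum.Plus\<close>)
qed

lemma of_real_divide_Suc_mult: "complex_of_real (w / Suc n) * of_nat (Suc n) = of_real w"
proof -
  have "w / real (Suc n) * real (Suc n) = w"
    by simp
  then show ?thesis
    by (metis of_real_mult of_real_of_nat_eq)
qed

section \<open>Monomial matrices\<close>

definition monomial_mat :: "('n \<Rightarrow> 'n) \<Rightarrow> ('n \<Rightarrow> complex) \<Rightarrow> complex^'n^'n" where
  "monomial_mat m \<psi> = (\<chi> a x. if a = m x then \<psi> x else 0)"

context
  fixes m :: "'n::finite \<Rightarrow> 'n"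
  assumes involution: "\<And>x. m (m x) = x"
begin

lemma involution_eq_iff: "a = m x \<longleftrightarrow> x = m a"
  using involution by metis

lemma involution_inj_iff: "m a = m b \<longleftrightarrow> a = b"
  using involution by metis

lemma monomial_mat_mult_left:
  "(monomial_mat m \<psi> ** B) $ a $ y = \<psi> (m a) * B $ m a $ y"
  by (simp add: matrix_matrix_mult_def monomial_mat_def involution_eq_iff
      if_distrib[of "\<lambda>z. z * _"] cong: if_cong)

lemma mult_monomial_mat_right:
  "(B ** monomial_mat m \<psi>) $ a $ x = B $ a $ m x * \<psi> x"
  by (simp add: matrix_matrix_mult_def monomial_mat_def if_distrib[of "\<lambda>z. _ * z"] cong: if_cong)

lemma cmat_adj_monomial_mat:
  "cmat_adj (monomial_mat m \<psi>) = monomial_mat m (\<lambda>x. cnj (\<psi> (m x)))"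
  by (auto simp: vec_eq_iff cmat_adj_def monomial_mat_def involution)

lemma monomial_mat_conj_entry:
  "(monomial_mat m \<psi> ** \<rho> ** cmat_adj (monomial_mat m \<psi>)) $ a $ b
     = \<psi> (m a) * \<rho> $ m a $ m b * cnj (\<psi> (m b))"
  by (simp add: monomial_mat_mult_left mult_monomial_mat_right cmat_adj_monomial_mat
      involution matrix_mul_assoc[symmetric])

lemma cunitary_monomial_mat:
  assumes "\<And>x. cmod (\<psi> x) = 1"
  shows "cunitary (monomial_mat m \<psi>)"
proof -
  have unit: "\<psi> x * cnj (\<psi> x) = 1" "cnj (\<psi> x) * \<psi> x = 1" for x
    using assms[of x] by (simp_all add: complex_mult_cnj cmod_def mult.commute[of "cnj _"])
  have "(monomial_mat m \<psi> ** cmat_adj (monomial_mat m \<psi>)) $ a $ b = mat 1 $ a $ b" for a b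
    using monomial_mat_conj_entry[of \<psi> "mat 1" a b] unfolding matrix_mul_rid
    by (simp add: mat_def involution_inj_iff unit)
  moreover have "(cmat_adj (monomial_mat m \<psi>) ** monomial_mat m \<psi>) $ a $ b = mat 1 $ a $ b" for a b
    unfolding cmat_adj_monomial_mat monomial_mat_mult_left
    by (simp add: mat_def monomial_mat_def involution involution_eq_iff unit)
  ultimately show ?thesis
    unfolding cunitary_def by (simp add: vec_eq_iff)
qed

lemma real_orthogonal_monomial_mat:
  assumes "\<And>x. \<psi> x = 1 \<or> \<psi> x = -1"
  shows "real_orthogonal (monomial_mat m \<psi>)"
    and "transpose (monomial_mat m \<psi>) = cmat_adj (monomial_mat m \<psi>)"
proof -
  have real: "cnj (\<psi> x) = \<psi> x" "Im (\<psi> x) = 0" for x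
    using assms[of x] by auto
  show transp: "transpose (monomial_mat m \<psi>) = cmat_adj (monomial_mat m \<psi>)"
    by (simp add: vec_eq_iff transpose_def cmat_adj_def monomial_mat_def real)
  have "cunitary (monomial_mat m \<psi>)"
    by (rule cunitary_monomial_mat) (metis assms norm_one norm_minus_cancel)
  then show "real_orthogonal (monomial_mat m \<psi>)"
    unfolding real_orthogonal_def transp cunitary_def by (simp add: monomial_mat_def real)
qed

end

section \<open>Averaging over roots of unity\<close>

lemma sum_roots_unity_orthogonal:
  assumes "0 < d" and "s < d" and "t < d"
  shows "(\<Sum>j<d. cis (2*pi/d) ^ (j * s) * cnj (cis (2*pi/d)) ^ (j * t)) = (if s = t then of_nat d else 0)"
proof -
  let ?\<omega> = "cis (2*pi/d)"
  define z where "z = ?\<omega> ^ s * cnj (?\<omega> ^ t)"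
  have root_power: "?\<omega> ^ k = cis (2 * pi * real k / real d)" for k
    by (simp add: Complex.DeMoivre field_simps)
  have unit: "cnj (?\<omega> ^ k) * ?\<omega> ^ k = 1" for k
    by (simp add: root_power cis_cnj cis_mult)
  have terms: "?\<omega> ^ (j * s) * cnj ?\<omega> ^ (j * t) = z ^ j" for j
    by (simp add: z_def power_mult_distrib power_mult[symmetric] mult.commute[of j])
  have "?\<omega> ^ d = 1"
    using assms(1) by (simp add: root_power)
  then have "(?\<omega> ^ k) ^ d = 1" for k
    by (metis power_mult mult.commute power_one)
  then have "z ^ d = 1"
    by (simp add: z_def power_mult_distrib flip: complex_cnj_power)
  show ?thesis
  proof (cases "s = t")
    case True
    then show ?thesis
      using unit by (simp add: mult.commute)
  next
    case False
    have "?\<omega> ^ s \<noteq> ?\<omega> ^ t"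
      using inj_onD[OF bij_betw_imp_inj_on[OF Complex.bij_betw_roots_unity[OF assms(1)]]] assms False
      unfolding root_power by blast
    moreover have "?\<omega> ^ s = z * ?\<omega> ^ t"
      using unit[of t] by (simp add: z_def mult.assoc)
    ultimately have "z \<noteq> 1"
      by auto
    with \<open>z ^ d = 1\<close> have "(\<Sum>j<d. z ^ j) = 0"
      by (simp add: geometric_sum)
    then show ?thesis
      using False by (simp only: terms) simp
  qed
qed

lemma monomial_mat_phase_average:
  fixes m :: "'n::finite \<Rightarrow> 'n" and \<sigma> :: "'n \<Rightarrow> complex"
  assumes involution: "\<And>x. m (m x) = x" and "0 < d" and "\<And>x. g x < d"
  defines "M j \<equiv> monomial_mat m (\<lambda>x. cis (2*pi/d) ^ (j * g x) * \<sigma> x)"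
  shows "(\<Sum>j<d. M j ** \<rho> ** cmat_adj (M j)) $ a $ b
    = (if g (m a) = g (m b) then of_nat d * (\<sigma> (m a) * \<rho> $ m a $ m b * cnj (\<sigma> (m b))) else 0)"
proof -
  let ?\<omega> = "cis (2*pi/d)"
  have "(\<Sum>j<d. M j ** \<rho> ** cmat_adj (M j)) $ a $ b
      = (\<Sum>j<d. ?\<omega> ^ (j * g (m a)) * cnj ?\<omega> ^ (j * g (m b)))
        * (\<sigma> (m a) * \<rho> $ m a $ m b * cnj (\<sigma> (m b)))"
    by (simp add: sum_component sum_distrib_left sum_distrib_right M_def
        monomial_mat_conj_entry[OF involution] mult_ac)
  also have "\<dots> = (if g (m a) = g (m b) then of_nat d * (\<sigma> (m a) * \<rho> $ m a $ m b * cnj (\<sigma> (m b))) else 0)"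
    using assms(2,3) by (subst sum_roots_unity_orthogonal) auto
  finally show ?thesis .
qed

section \<open>A 1-factorisation of the complete graph\<close>

lemma odd_dvd_double_diff_imp_eq:
  fixes n a b :: int
  assumes "odd n" and "n dvd 2 * a - 2 * b" and "\<bar>a - b\<bar> < n"
  shows "a = b"
proof (rule ccontr)
  assume "a \<noteq> b"
  moreover have "n dvd a - b"
    using assms(1,2) coprime_dvd_mult_right_iff[of n 2 "a - b"] by (simp add: algebra_simps)
  ultimately have "\<bar>n\<bar> \<le> \<bar>a - b\<bar>"
    using dvd_imp_le_int[of "a - b" n] by simp
  with assms(3) show False
    by simp
qed

text \<open>The classical 1-factorisation of the complete graph on \<open>{..n}\<close>, \<open>n\<close> odd: in round
  \<open>r < n\<close> the vertex \<open>n\<close> is paired with \<open>r\<close>, and two vertices \<open>x, y < n\<close> are paired iff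
  \<open>x + y \<equiv> 2 r (mod n)\<close>. Since \<open>2\<close> is invertible mod \<open>n\<close>, every pair occurs in exactly one
  round.\<close>

definition round_robin :: "nat \<Rightarrow> nat \<Rightarrow> nat \<Rightarrow> nat" where
  "round_robin n r x = (if x = n then r else if x = r then n else nat ((2 * int r - int x) mod int n))"

lemma round_robin_top [simp]: "round_robin n r n = r"
  by (simp add: round_robin_def)

lemma round_robin_self [simp]: "r < n \<Longrightarrow> round_robin n r r = n"
  by (simp add: round_robin_def)

context
  fixes n :: nat
  assumes odd_n: "odd n"
begin

lemma round_robin_inner:
  assumes "r < n" and "x < n" and "x \<noteq> r"
  shows "int (round_robin n r x) = (2 * int r - int x) mod int n"
    and "round_robin n r x < n"
    and "round_robin n r x \<noteq> r"
    and "round_robin n r x \<noteq> x"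
proof -
  show eq: "int (round_robin n r x) = (2 * int r - int x) mod int n"
    using assms by (simp add: round_robin_def)
  have "(2 * int r - int x) mod int n < int n"
    using assms(1) by simp
  with eq show "round_robin n r x < n"
    by linarith
  have "\<bar>int r - int x\<bar> < int n"
    using assms by linarith
  then have cancel: "int n dvd 2 * int r - 2 * int x \<Longrightarrow> False"
    using odd_dvd_double_diff_imp_eq[of "int n" "int r" "int x"] odd_n assms(3) by auto
  have small: "int x mod int n = int x" "int r mod int n = int r"
    using assms by simp_all
  show "round_robin n r x \<noteq> x"
  proof
    assume "round_robin n r x = x"
    then have "(2 * int r - int x) mod int n = int x mod int n"
      using eq small by simp
    then show False
      using cancel by (simp add: mod_eq_dvd_iff)
  qed
  show "round_robin n r x \<noteq> r"
  proof
    assume "round_robin n r x = r"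
    then have "(2 * int r - int x) mod int n = int r mod int n"
      using eq small by simp
    then have "int n dvd int r - int x"
      by (simp add: mod_eq_dvd_iff)
    then have "int n dvd 2 * int r - 2 * int x"
      using dvd_mult[of "int n" "int r - int x" 2] by (simp add: algebra_simps)
    then show False
      using cancel by simp
  qed
qed

lemma round_robin_le:
  "r < n \<Longrightarrow> x \<le> n \<Longrightarrow> round_robin n r x \<le> n"
  using round_robin_inner(2)[of r x] by (cases "x = n \<or> x = r") auto

lemma round_robin_neq:
  "r < n \<Longrightarrow> x \<le> n \<Longrightarrow> round_robin n r x \<noteq> x"
  using round_robin_inner(4)[of r x] by (cases "x = n \<or> x = r") auto

lemma round_robin_involution:
  assumes "r < n" and "x \<le> n"
  shows "round_robin n r (round_robin n r x) = x"
proof (cases "x = n \<or> x = r")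
  case True
  with assms show ?thesis
    by auto
next
  case False
  with assms have x: "x < n" "x \<noteq> r"
    by auto
  note y = round_robin_inner[OF assms(1) x]
  have "int (round_robin n r (round_robin n r x)) = (2 * int r - (2 * int r - int x) mod int n) mod int n"
    using round_robin_inner(1)[OF assms(1) y(2,3)] y(1) by simp
  also have "\<dots> = int x"
    using x by (simp add: mod_diff_right_eq)
  finally show ?thesis
    by simp
qed

lemma inj_on_round_robin:
  assumes "x \<le> n"
  shows "inj_on (\<lambda>r. round_robin n r x) {..<n}"
proof (rule inj_onI)
  fix r r' assume r: "r \<in> {..<n}" and r': "r' \<in> {..<n}"
    and eq: "round_robin n r x = round_robin n r' x"
  have top_iff: "round_robin n s x = n \<longleftrightarrow> x = s" if "s < n" "x < n" for s
    using that round_robin_inner(2)[of s x] by (cases "x = s") auto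
  show "r = r'"
  proof (cases "x = n \<or> x = r \<or> x = r'")
    case True
    then show ?thesis
      using eq r r' top_iff[of r] top_iff[of r'] by auto
  next
    case False
    with assms have x: "x < n"
      by simp
    have "(2 * int r - int x) mod int n = (2 * int r' - int x) mod int n"
      using eq round_robin_inner(1)[of r x] round_robin_inner(1)[of r' x] r r' x False by auto
    then have "int n dvd 2 * int r - 2 * int r'"
      by (simp add: mod_eq_dvd_iff)
    moreover have "\<bar>int r - int r'\<bar> < int n"
      using r r' by auto
    ultimately show ?thesis
      using odd_dvd_double_diff_imp_eq[of "int n" "int r" "int r'"] odd_n by simp
  qed
qed

lemma bij_betw_round_robin:
  assumes "x \<le> n"
  shows "bij_betw (\<lambda>r. round_robin n r x) {..<n} ({..n} - {x})"
proof (rule bij_betw_imageI)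
  show inj: "inj_on (\<lambda>r. round_robin n r x) {..<n}"
    using assms by (rule inj_on_round_robin)
  have sub: "(\<lambda>r. round_robin n r x) ` {..<n} \<subseteq> {..n} - {x}"
    using round_robin_le round_robin_neq assms by auto
  have "card ((\<lambda>r. round_robin n r x) ` {..<n}) = card ({..n} - {x})"
    using card_image[OF inj] assms by simp
  then show "(\<lambda>r. round_robin n r x) ` {..<n} = {..n} - {x}"
    using card_subset_eq[OF _ sub] by simp
qed

end

section \<open>Dephasing and pair exchange as unitary mixtures\<close>

definition dephased_map :: "real \<Rightarrow> real \<Rightarrow> complex^'n^'n \<Rightarrow> complex^'n^'n" where
  "dephased_map c a \<rho> = (\<chi> p q. if p = q then of_real c * \<rho> $ p $ p else of_real a * \<rho> $ p $ q)"

definition pair_exchange_map :: "real \<Rightarrow> complex \<Rightarrow> complex^'n^'n \<Rightarrow> complex^'n^'n" where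
  "pair_exchange_map w s \<rho> =
     (\<chi> p q. if p = q then of_real w * (\<Sum>z\<in>UNIV - {p}. \<rho> $ z $ z) else of_real w * s * \<rho> $ q $ p)"

definition pairing :: "('n \<Rightarrow> nat) \<Rightarrow> nat \<Rightarrow> nat \<Rightarrow> 'n \<Rightarrow> 'n" where
  "pairing e n r x = inv_into UNIV e (round_robin n r (e x))"

definition pair_label :: "('n \<Rightarrow> nat) \<Rightarrow> nat \<Rightarrow> nat \<Rightarrow> 'n \<Rightarrow> nat" where
  "pair_label e n r x = min (e x) (e (pairing e n r x))"

definition pair_phase :: "('n \<Rightarrow> nat) \<Rightarrow> nat \<Rightarrow> complex \<Rightarrow> nat \<Rightarrow> 'n \<Rightarrow> complex" where
  "pair_phase e n s r x = (if e x < e (pairing e n r x) then 1 else s)"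

locale odd_enumeration =
  fixes e :: "'n::finite \<Rightarrow> nat" and n :: nat
  assumes enum: "bij_betw e UNIV {..n}" and odd_n: "odd n"
begin

lemma enum_le: "e x \<le> n"
  using enum by (auto simp: bij_betw_def)

lemma enum_eq_iff: "e x = e y \<longleftrightarrow> x = y"
  using enum by (auto simp: bij_betw_def inj_on_def)

lemma enum_inv [simp]: "k \<le> n \<Longrightarrow> e (inv_into UNIV e k) = k"
  using bij_betw_inv_into_right[OF enum] by simp

lemma enum_pairing: "r < n \<Longrightarrow> e (pairing e n r x) = round_robin n r (e x)"
  unfolding pairing_def using round_robin_le[OF odd_n] enum_le by simp

lemma pairing_involution: "r < n \<Longrightarrow> pairing e n r (pairing e n r x) = x"
  using enum_pairing round_robin_involution[OF odd_n _ enum_le] enum_eq_iff by metis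

lemma pairing_neq: "r < n \<Longrightarrow> pairing e n r x \<noteq> x"
  using enum_pairing round_robin_neq[OF odd_n _ enum_le] by metis

lemma sum_pairing: "(\<Sum>r<n. f (pairing e n r x)) = (\<Sum>z\<in>UNIV - {x}. f z)"
proof -
  have "(\<Sum>r<n. f (pairing e n r x)) = (\<Sum>k\<in>{..n} - {e x}. f (inv_into UNIV e k))"
    unfolding pairing_def
    by (rule sum.reindex_bij_betw[OF bij_betw_round_robin[OF odd_n enum_le],
          of "\<lambda>k. f (inv_into UNIV e k)"])
  also have "\<dots> = (\<Sum>z\<in>UNIV - {x}. f z)"
  proof (rule sum.reindex_bij_betw)
    have "e ` (UNIV - {x}) = {..n} - {e x}"
      using enum by (auto simp: bij_betw_def inj_on_def)
    then show "bij_betw (inv_into UNIV e) ({..n} - {e x}) (UNIV - {x})"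
      by (rule bij_betw_inv_into_subset[OF enum subset_UNIV])
  qed
  finally show ?thesis .
qed

lemma pair_label_le: "pair_label e n r x \<le> n"
  by (simp add: pair_label_def enum_le min.coboundedI1)

lemma pair_label_pairing [simp]: "r < n \<Longrightarrow> pair_label e n r (pairing e n r x) = pair_label e n r x"
  by (simp add: pair_label_def pairing_involution min.commute)

lemma pair_label_eq_iff:
  assumes "r < n"
  shows "pair_label e n r a = pair_label e n r b \<longleftrightarrow> b = a \<or> b = pairing e n r a"
proof
  have "pair_label e n r x \<in> e ` {x, pairing e n r x}" for x
    by (simp add: pair_label_def min_def)
  then obtain z z' where z: "z \<in> {a, pairing e n r a}" "pair_label e n r a = e z"
    and z': "z' \<in> {b, pairing e n r b}" "pair_label e n r b = e z'"
    by blast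
  assume "pair_label e n r a = pair_label e n r b"
  with z z' have "z = z'"
    by (simp add: enum_eq_iff)
  with z z' show "b = a \<or> b = pairing e n r a"
    using pairing_involution[OF assms] by (metis insert_iff singletonD)
next
  assume "b = a \<or> b = pairing e n r a"
  then show "pair_label e n r a = pair_label e n r b"
    using assms by auto
qed

lemma pair_phase_round_average:
  assumes r: "r < n" and s: "s = 1 \<or> s = -1"
  defines "M j \<equiv> monomial_mat (pairing e n r)
    (\<lambda>x. cis (2*pi/Suc n) ^ (j * pair_label e n r x) * pair_phase e n s r x)"
  shows "(\<Sum>j<Suc n. M j ** \<rho> ** cmat_adj (M j)) $ a $ b = of_nat (Suc n) *
    (if a = b then \<rho> $ pairing e n r a $ pairing e n r a
       else if b = pairing e n r a then s * \<rho> $ b $ a else 0)"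
proof -
  let ?M = "pairing e n r" and ?\<sigma> = "pair_phase e n s r"
  have unit: "?\<sigma> x * cnj (?\<sigma> x) = 1" for x
    using s by (auto simp: pair_phase_def)
  have flip: "?\<sigma> (?M x) * cnj (?\<sigma> x) = s" for x
  proof -
    have "e (?M x) \<noteq> e x"
      using pairing_neq[OF r] enum_eq_iff by blast
    then show ?thesis
      using s by (auto simp: pair_phase_def pairing_involution[OF r])
  qed
  have "(\<Sum>j<Suc n. M j ** \<rho> ** cmat_adj (M j)) $ a $ b
      = (if b = a \<or> b = ?M a then of_nat (Suc n) * (?\<sigma> (?M a) * \<rho> $ ?M a $ ?M b * cnj (?\<sigma> (?M b))) else 0)"
    unfolding M_def
    by (subst monomial_mat_phase_average)
      (simp_all add: pairing_involution[OF r] pair_label_le le_imp_less_Suc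
        pair_label_pairing[OF r] pair_label_eq_iff[OF r])
  also have "\<dots> = of_nat (Suc n) *
      (if a = b then \<rho> $ ?M a $ ?M a else if b = ?M a then s * \<rho> $ b $ a else 0)"
  proof (cases "b = ?M a")
    case True
    then have "?M b = a"
      using pairing_involution[OF r] by simp
    moreover have "a \<noteq> b"
      using True pairing_neq[OF r, of a] by auto
    moreover have "?\<sigma> (?M a) * \<rho> $ ?M a $ a * cnj (?\<sigma> a) = (?\<sigma> (?M a) * cnj (?\<sigma> a)) * \<rho> $ ?M a $ a"
      by (simp only: mult_ac)
    ultimately show ?thesis
      using True by (simp add: flip)
  next
    case False
    have "?\<sigma> (?M a) * \<rho> $ ?M a $ ?M a * cnj (?\<sigma> (?M a)) = \<rho> $ ?M a $ ?M a"
      using unit[of "?M a"] by (simp add: mult.commute mult.left_commute)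
    with False show ?thesis
      by (cases "a = b") simp_all
  qed
  finally show ?thesis .
qed

lemma pairing_phase_average:
  assumes s: "s = 1 \<or> s = -1"
  defines "M r j \<equiv> monomial_mat (pairing e n r)
    (\<lambda>x. cis (2*pi/Suc n) ^ (j * pair_label e n r x) * pair_phase e n s r x)"
  shows "(\<Sum>r<n. \<Sum>j<Suc n. M r j ** \<rho> ** cmat_adj (M r j)) $ a $ b
    = of_nat (Suc n) * (if a = b then (\<Sum>z\<in>UNIV - {a}. \<rho> $ z $ z) else s * \<rho> $ b $ a)"
proof -
  have component: "(\<Sum>r<n. X r) $ a $ b = (\<Sum>r<n. X r $ a $ b)" for X :: "nat \<Rightarrow> complex^'n^'n"
    by (simp add: sum_component)
  have "(\<Sum>r<n. \<Sum>j<Suc n. M r j ** \<rho> ** cmat_adj (M r j)) $ a $ b = (\<Sum>r<n. of_nat (Suc n) *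
      (if a = b then \<rho> $ pairing e n r a $ pairing e n r a
       else if b = pairing e n r a then s * \<rho> $ b $ a else 0))"
    unfolding component
  proof (rule sum.cong[OF refl])
    fix r assume "r \<in> {..<n}"
    then have "r < n"
      by simp
    then show "(\<Sum>j<Suc n. M r j ** \<rho> ** cmat_adj (M r j)) $ a $ b = of_nat (Suc n) *
      (if a = b then \<rho> $ pairing e n r a $ pairing e n r a
       else if b = pairing e n r a then s * \<rho> $ b $ a else 0)"
      unfolding M_def by (rule pair_phase_round_average[OF _ s])
  qed
  also have "\<dots> = of_nat (Suc n) * (if a = b then (\<Sum>z\<in>UNIV - {a}. \<rho> $ z $ z) else s * \<rho> $ b $ a)"
  proof (cases "a = b")
    case True
    then show ?thesis
      using sum_pairing[of "\<lambda>z. \<rho> $ z $ z" a] by (simp add: sum_distrib_left[symmetric])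
  next
    case False
    have "(\<Sum>r<n. if b = pairing e n r a then s * \<rho> $ b $ a else 0) = s * \<rho> $ b $ a"
      using sum_pairing[of "\<lambda>z. if b = z then s * \<rho> $ b $ a else 0" a] False by simp
    with False show ?thesis
      by (simp add: sum_distrib_left[symmetric])
  qed
  finally show ?thesis .
qed

lemma pair_exchange_map_eq_average:
  assumes s: "s = 1 \<or> s = -1"
  defines "M r j \<equiv> monomial_mat (pairing e n r)
    (\<lambda>x. cis (2*pi/Suc n) ^ (j * pair_label e n r x) * pair_phase e n s r x)"
  shows "pair_exchange_map w s \<rho>
    = (\<Sum>(r, j)\<in>{..<n} \<times> {..<Suc n}. cmat_scale (of_real (w / Suc n)) (M r j ** \<rho> ** cmat_adj (M r j)))"
proof -
  have "(\<Sum>(r, j)\<in>{..<n} \<times> {..<Suc n}. cmat_scale (of_real (w / Suc n)) (M r j ** \<rho> ** cmat_adj (M r j))) $ k $ l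
      = of_real (w / Suc n) * (\<Sum>r<n. \<Sum>j<Suc n. M r j ** \<rho> ** cmat_adj (M r j)) $ k $ l" for k l
    by (simp add: sum_component sum.cartesian_product sum_distrib_left split_def del: sum.lessThan_Suc)
  also have "\<dots> k l = of_real (w / Suc n) * (of_nat (Suc n)
      * (if k = l then (\<Sum>z\<in>UNIV - {k}. \<rho> $ z $ z) else s * \<rho> $ l $ k))" for k l
    unfolding M_def pairing_phase_average[OF s] ..
  also have "\<dots> k l = pair_exchange_map w s \<rho> $ k $ l" for k l
    by (simp only: mult.assoc[symmetric] of_real_divide_Suc_mult) (simp add: pair_exchange_map_def)
  finally show ?thesis
    by (simp add: vec_eq_iff)
qed

lemma unitary_mixture_pair_exchange:
  assumes "0 \<le> w" and s: "s = 1 \<or> s = -1"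
  shows "unitary_mixture (real n * w) (pair_exchange_map w s :: complex^'n^'n \<Rightarrow> complex^'n^'n)"
proof -
  define M where "M r j = monomial_mat (pairing e n r)
    (\<lambda>x. cis (2*pi/Suc n) ^ (j * pair_label e n r x) * pair_phase e n s r x)" for r j
  have "cunitary (M r j)" if "r < n" for r j
    unfolding M_def by (rule cunitary_monomial_mat)
      (use s in \<open>auto simp: pairing_involution[OF that] pair_phase_def norm_mult norm_power\<close>)
  moreover have "(\<Sum>x\<in>{..<n} \<times> {..<Suc n}. w / Suc n) = real n * w"
    by (simp add: field_simps add_nonneg_eq_0_iff)
  ultimately show ?thesis
    using \<open>0 \<le> w\<close> pair_exchange_map_eq_average[OF s, of w]
    by (intro unitary_mixtureI[where S = "{..<n} \<times> {..<Suc n}" and p = "\<lambda>_. w / Suc n"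
          and U = "\<lambda>(r, j). M r j"]) (auto simp: M_def split_def)
qed

lemma diagonal_phase_average:
  defines "Z j \<equiv> monomial_mat (\<lambda>x. x) (\<lambda>x. cis (2*pi/Suc n) ^ (j * e x))"
  shows "(\<Sum>j<Suc n. Z j ** \<rho> ** cmat_adj (Z j)) $ p $ q = (if p = q then of_nat (Suc n) * \<rho> $ p $ q else 0)"
  using monomial_mat_phase_average[where m = "\<lambda>x. x" and d = "Suc n" and g = e and \<sigma> = "\<lambda>_. 1"
      and \<rho> = \<rho> and a = p and b = q, OF refl zero_less_Suc enum_le[THEN le_imp_less_Suc],
      unfolded mult_1_right mult_1_left complex_cnj_one]
  unfolding Z_def by (simp add: enum_eq_iff)

lemma dephased_map_eq_average:
  fixes c a :: real
  defines "Z j \<equiv> monomial_mat (\<lambda>x. x) (\<lambda>x. cis (2*pi/Suc n) ^ (j * e x))"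
    and "p j \<equiv> (c - a) / Suc n + (if j = 0 then a else 0)"
  shows "dephased_map c a \<rho> = (\<Sum>j<Suc n. cmat_scale (of_real (p j)) (Z j ** \<rho> ** cmat_adj (Z j)))"
proof -
  have average: "(\<Sum>j<Suc n. (Z j ** \<rho> ** cmat_adj (Z j)) $ k $ l)
      = (if k = l then of_nat (Suc n) * \<rho> $ k $ l else 0)" for k l
    using diagonal_phase_average[of \<rho> k l] unfolding Z_def sum_component .
  have identity: "Z 0 ** \<rho> ** cmat_adj (Z 0) = \<rho>"
    by (simp add: Z_def monomial_mat_conj_entry vec_eq_iff)
  have split: "of_real (p j) * X = of_real ((c - a) / Suc n) * X + (if j = 0 then of_real a * X else 0)"
    for j and X :: complex
    by (simp add: p_def distrib_right)
  have "(\<Sum>j<Suc n. cmat_scale (of_real (p j)) (Z j ** \<rho> ** cmat_adj (Z j))) $ k $ l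
      = of_real ((c - a) / Suc n) * (\<Sum>j<Suc n. (Z j ** \<rho> ** cmat_adj (Z j)) $ k $ l)
        + of_real a * (Z 0 ** \<rho> ** cmat_adj (Z 0)) $ k $ l" for k l
    unfolding sum_component cmat_scale_component split sum.distrib sum_distrib_left
    by (simp del: sum.lessThan_Suc)
  also have "\<dots> k l = dephased_map c a \<rho> $ k $ l" for k l
  proof (cases "k = l")
    case True
    have "of_real ((c - a) / Suc n) * (of_nat (Suc n) * \<rho> $ k $ k) = of_real (c - a) * \<rho> $ k $ k"
      by (simp only: mult.assoc[symmetric] of_real_divide_Suc_mult)
    then show ?thesis
      unfolding average identity using True by (simp add: dephased_map_def algebra_simps)
  qed (unfold average identity, simp add: dephased_map_def)
  finally show ?thesis
    by (simp add: vec_eq_iff)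
qed

lemma unitary_mixture_dephasing:
  assumes "a \<le> c" and "0 \<le> c + real n * a"
  shows "unitary_mixture c (dephased_map c a :: complex^'n^'n \<Rightarrow> complex^'n^'n)"
proof -
  define p where "p j = (c - a) / Suc n + (if j = 0 then a else 0)" for j :: nat
  have "0 \<le> p 0"
  proof -
    have "0 \<le> (c + real n * a) / Suc n"
      using assms(2) by simp
    also have "\<dots> = p 0"
      by (simp add: p_def field_simps add_nonneg_eq_0_iff)
    finally show ?thesis .
  qed
  then have "0 \<le> p j" for j
    using assms(1) by (cases "j = 0") (simp_all add: p_def)
  moreover have "(\<Sum>j<Suc n. p j) = real (Suc n) * ((c - a) / Suc n) + a"
    by (simp add: p_def sum.distrib del: sum.lessThan_Suc of_nat_Suc)
  moreover have "cunitary (monomial_mat (\<lambda>x. x) (\<lambda>x. cis (2*pi/Suc n) ^ (j * e x)))" for j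
    by (rule cunitary_monomial_mat) (simp_all add: norm_power)
  ultimately show ?thesis
    by (intro unitary_mixtureI[where S = "{..<Suc n}" and p = p
          and U = "\<lambda>j. monomial_mat (\<lambda>x. x) (\<lambda>x. cis (2*pi/Suc n) ^ (j * e x))"])
      (simp_all add: p_def dephased_map_eq_average)
qed

end

section \<open>Orthogonally covariant linear maps\<close>

definition matrix_unit :: "'n \<Rightarrow> 'n \<Rightarrow> complex^'n^'n" where
  "matrix_unit i j = (\<chi> a b. if a = i \<and> b = j then 1 else 0)"

lemma matrix_unit_component [simp]: "matrix_unit i j $ a $ b = (if a = i \<and> b = j then 1 else 0)"
  by (simp add: matrix_unit_def)

lemma matrix_unit_expansion:
  "\<rho> = (\<Sum>i\<in>UNIV. \<Sum>j\<in>UNIV. cmat_scale (\<rho> $ i $ j) (matrix_unit i j))"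
proof -
  have delta: "(if a = i \<and> b = j then t else 0) = (if j = b then if i = a then t else 0 else 0)"
    for a b i j and t :: complex
    by auto
  show ?thesis
    by (simp add: vec_eq_iff sum_component delta if_distrib[of "\<lambda>t. _ * t"] cong: if_cong)
qed

lemma clinear_map_zero:
  assumes "clinear_map T"
  shows "T 0 = 0"
proof -
  have "T 0 + T 0 = T 0"
    using assms by (metis add_0 clinear_map_def)
  then show ?thesis
    by simp
qed

lemma clinear_map_sum:
  assumes "clinear_map T"
  shows "T (\<Sum>x\<in>S. f x) = (\<Sum>x\<in>S. T (f x))"
proof (cases "finite S")
  case True
  then show ?thesis
    by induction (use assms in \<open>simp_all add: clinear_map_zero clinear_map_def\<close>)
qed (simp add: clinear_map_zero[OF assms])

lemma clinear_map_eqI: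
  assumes "clinear_map T" and "clinear_map S" and "\<And>i j. T (matrix_unit i j) = S (matrix_unit i j)"
  shows "T = S"
proof
  fix \<rho>
  have "T \<rho> = (\<Sum>i\<in>UNIV. \<Sum>j\<in>UNIV. cmat_scale (\<rho> $ i $ j) (T (matrix_unit i j)))"
    by (subst matrix_unit_expansion) (use assms(1) in \<open>simp add: clinear_map_sum clinear_map_def\<close>)
  also have "\<dots> = S \<rho>"
    by (subst (2) matrix_unit_expansion) (use assms(2,3) in \<open>simp add: clinear_map_sum clinear_map_def\<close>)
  finally show "T \<rho> = S \<rho>" .
qed

definition orth_cov_map :: "complex \<Rightarrow> complex \<Rightarrow> complex \<Rightarrow> complex \<Rightarrow> complex^'n^'n \<Rightarrow> complex^'n^'n" where
  "orth_cov_map A B C0 C1 \<rho> = (\<chi> p q. if p = q then C0 * \<rho> $ p $ p + C1 * (\<Sum>z\<in>UNIV - {p}. \<rho> $ z $ z)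
                                     else A * \<rho> $ p $ q + B * \<rho> $ q $ p)"

lemma clinear_map_orth_cov_map: "clinear_map (orth_cov_map A B C0 C1)"
  by (simp add: clinear_map_def orth_cov_map_def vec_eq_iff sum.distrib sum_distrib_left algebra_simps)

lemma orth_cov_map_matrix_unit:
  "orth_cov_map A B C0 C1 (matrix_unit i j) $ p $ q =
     (if p = q then (if i = j then (if p = i then C0 else C1) else 0)
      else if p = i \<and> q = j then A else if p = j \<and> q = i then B else 0)"
proof -
  have "(\<Sum>z\<in>UNIV - {p}. matrix_unit i j $ z $ z) = (if i = j \<and> i \<noteq> p then 1 else 0)"
    by (cases "i = j") (auto intro!: sum.neutral split: if_splits)
  then show ?thesis
    by (auto simp: orth_cov_map_def)
qed

lemma orth_cov_map_matrix_unit_row_sum: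
  fixes x :: "'n::finite"
  shows "(\<Sum>y\<in>UNIV. orth_cov_map A B C0 C1 (matrix_unit x y) $ x $ y) = C0 + of_nat (CARD('n) - 1) * A"
proof -
  have "(\<Sum>y\<in>UNIV. orth_cov_map A B C0 C1 (matrix_unit x y) $ x $ y)
      = C0 + (\<Sum>y\<in>UNIV - {x}. orth_cov_map A B C0 C1 (matrix_unit x y) $ x $ y)"
    by (subst sum.remove[of UNIV x]) (simp_all add: orth_cov_map_matrix_unit)
  also have "\<dots> = C0 + (\<Sum>y\<in>UNIV - {x}. A)"
    by (auto simp: orth_cov_map_matrix_unit intro!: sum.cong)
  finally show ?thesis
    by simp
qed

lemma trace_orth_cov_map:
  "trace (orth_cov_map A B C0 C1 \<rho>) = (C0 + of_nat (CARD('n) - 1) * C1) * trace (\<rho> :: complex^'n^'n)"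
proof -
  have "(\<Sum>p\<in>UNIV. \<Sum>z\<in>UNIV - {p}. \<rho> $ z $ z) = (\<Sum>p\<in>UNIV. trace \<rho> - \<rho> $ p $ p)"
    by (simp add: trace_def sum_diff1)
  also have "\<dots> = of_nat (CARD('n) - 1) * trace \<rho>"
    by (simp add: sum_subtractf trace_def of_nat_diff algebra_simps)
  finally have off_diagonal: "(\<Sum>p\<in>UNIV. \<Sum>z\<in>UNIV - {p}. \<rho> $ z $ z) = of_nat (CARD('n) - 1) * trace \<rho>" .
  have "trace (orth_cov_map A B C0 C1 \<rho>) = C0 * trace \<rho> + C1 * (\<Sum>p\<in>UNIV. \<Sum>z\<in>UNIV - {p}. \<rho> $ z $ z)"
    by (simp add: trace_def orth_cov_map_def sum.distrib sum_distrib_left)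
  then show ?thesis
    unfolding off_diagonal by (simp add: algebra_simps)
qed

lemma trace_preserving_orth_cov_map:
  "trace_preserving (orth_cov_map A B C0 C1 :: complex^'n^'n \<Rightarrow> complex^'n^'n)
     \<longleftrightarrow> C0 + of_nat (CARD('n) - 1) * C1 = 1"
proof
  fix i :: 'n
  assume "trace_preserving (orth_cov_map A B C0 C1 :: complex^'n^'n \<Rightarrow> complex^'n^'n)"
  then have "trace (orth_cov_map A B C0 C1 (matrix_unit i i)) = trace (matrix_unit i i :: complex^'n^'n)"
    by (simp add: trace_preserving_def)
  then show "C0 + of_nat (CARD('n) - 1) * C1 = 1"
    unfolding trace_orth_cov_map by (simp add: trace_def)
qed (simp add: trace_preserving_def trace_orth_cov_map)

lemma monomial_mat_conj_matrix_unit: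
  assumes "\<And>x. m (m x) = x"
  shows "monomial_mat m \<psi> ** matrix_unit i j ** cmat_adj (monomial_mat m \<psi>)
    = cmat_scale (\<psi> i * cnj (\<psi> j)) (matrix_unit (m i) (m j))"
  by (auto simp: vec_eq_iff monomial_mat_conj_entry[OF assms] involution_eq_iff[OF assms] assms)

lemma transposition_invariant_eq:
  fixes G :: "'a \<Rightarrow> 'a \<Rightarrow> 'b"
  assumes invariant: "\<And>u v x y. G (Transposition.transpose u v x) (Transposition.transpose u v y) = G x y"
    and "x \<noteq> y" and "x' \<noteq> y'"
  shows "G x y = G x' y'"
proof -
  define y1 where "y1 = Transposition.transpose x x' y"
  have "G x y = G x' y1"
    using invariant[of x x' x y] by (simp add: y1_def)
  also have "\<dots> = G x' y'"
  proof -
    have "Transposition.transpose x x' y \<noteq> Transposition.transpose x x' x"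
      using assms(2) transpose_eq_imp_eq by metis
    then have "x' \<noteq> y1"
      by (simp add: y1_def)
    then show ?thesis
      using invariant[of y1 y' x' y1] assms(3) by simp
  qed
  finally show ?thesis .
qed

context
  fixes T :: "complex^'n::finite^'n \<Rightarrow> complex^'n^'n"
  assumes lin: "clinear_map T"
    and cov: "\<And>\<rho> Q. real_orthogonal Q \<Longrightarrow> T (Q ** \<rho> ** transpose Q) = Q ** T \<rho> ** transpose Q"
begin

lemma covariant_monomial:
  assumes involution: "\<And>x. m (m x) = x" and signs: "\<And>x. \<psi> x = 1 \<or> \<psi> x = -1"
  shows "\<psi> i * \<psi> j * T (matrix_unit (m i) (m j)) $ a $ b = \<psi> (m a) * \<psi> (m b) * T (matrix_unit i j) $ m a $ m b"
proof -
  have real: "cnj (\<psi> x) = \<psi> x" for x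
    using signs[of x] by auto
  note orth = real_orthogonal_monomial_mat[OF involution signs]
  have "cmat_scale (\<psi> i * \<psi> j) (T (matrix_unit (m i) (m j)))
      = monomial_mat m \<psi> ** T (matrix_unit i j) ** cmat_adj (monomial_mat m \<psi>)"
    using cov[where \<rho> = "matrix_unit i j", OF orth(1)] lin
    unfolding orth(2) monomial_mat_conj_matrix_unit[OF involution] by (simp add: clinear_map_def real)
  then have "(\<psi> i * \<psi> j) * T (matrix_unit (m i) (m j)) $ a $ b
      = \<psi> (m a) * T (matrix_unit i j) $ m a $ m b * cnj (\<psi> (m b))"
    by (metis cmat_scale_component monomial_mat_conj_entry[OF involution])
  then show ?thesis
    by (simp add: real mult_ac)
qed

lemma covariant_support:
  assumes "T (matrix_unit i j) $ a $ b \<noteq> 0"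
  shows "if i = j then a = b else (a = i \<and> b = j) \<or> (a = j \<and> b = i)"
proof -
  have parity: "((i = k) = (j = k)) = ((a = k) = (b = k))" for k
  proof -
    let ?\<psi> = "\<lambda>x. if x = k then -1 else 1 :: complex"
    have "?\<psi> i * ?\<psi> j = ?\<psi> a * ?\<psi> b"
      using covariant_monomial[of "\<lambda>x. x" ?\<psi> i j a b] assms by auto
    then show ?thesis
      by (auto split: if_splits)
  qed
  show ?thesis
  proof (cases "i = j")
    case True
    then show ?thesis
      using parity[of a] by simp
  next
    case False
    then have "(a = i) \<noteq> (b = i)" and "(a = j) \<noteq> (b = j)"
      using parity[of i] parity[of j] by auto
    with False show ?thesis
      by auto
  qed
qed

lemma covariant_transpose:
  "T (matrix_unit (Transposition.transpose u v i) (Transposition.transpose u v j))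
     $ Transposition.transpose u v a $ Transposition.transpose u v b = T (matrix_unit i j) $ a $ b"
  using covariant_monomial[of "Transposition.transpose u v" "\<lambda>_. 1" i j
      "Transposition.transpose u v a" "Transposition.transpose u v b"]
  by simp

lemma covariant_off_diagonal_unit:
  assumes "i \<noteq> j" and "i0 \<noteq> j0"
  shows "T (matrix_unit i j) $ p $ q =
    (if p = i \<and> q = j then T (matrix_unit i0 j0) $ i0 $ j0
     else if p = j \<and> q = i then T (matrix_unit i0 j0) $ j0 $ i0 else 0)"
proof -
  have "T (matrix_unit i j) $ i $ j = T (matrix_unit i0 j0) $ i0 $ j0"
    by (rule transposition_invariant_eq[where G = "\<lambda>x y. T (matrix_unit x y) $ x $ y",
          OF covariant_transpose assms])
  moreover have "T (matrix_unit i j) $ j $ i = T (matrix_unit i0 j0) $ j0 $ i0"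
    by (rule transposition_invariant_eq[where G = "\<lambda>x y. T (matrix_unit x y) $ y $ x",
          OF covariant_transpose assms])
  moreover have "T (matrix_unit i j) $ p $ q = 0" if "\<not> (p = i \<and> q = j)" and "\<not> (p = j \<and> q = i)"
    using covariant_support[of i j p q] that assms(1) by auto
  ultimately show ?thesis
    by auto
qed

lemma covariant_diagonal_unit:
  assumes "i0 \<noteq> j0"
  shows "T (matrix_unit i i) $ p $ q =
    (if p \<noteq> q then 0 else if p = i then T (matrix_unit i0 i0) $ i0 $ i0 else T (matrix_unit i0 i0) $ j0 $ j0)"
proof -
  have "T (matrix_unit i i) $ i $ i = T (matrix_unit i0 i0) $ i0 $ i0"
    using covariant_transpose[of i i0 i i i i] by simp
  moreover have "T (matrix_unit i i) $ p $ p = T (matrix_unit i0 i0) $ j0 $ j0" if "p \<noteq> i"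
    by (rule transposition_invariant_eq[where G = "\<lambda>x y. T (matrix_unit x x) $ y $ y",
          OF covariant_transpose]) (use that assms in auto)
  moreover have "T (matrix_unit i i) $ p $ q = 0" if "p \<noteq> q"
    using covariant_support[of i i p q] that by auto
  ultimately show ?thesis
    by auto
qed

lemma covariant_matrix_unit_component:
  assumes "i0 \<noteq> j0"
  shows "T (matrix_unit i j) $ p $ q = orth_cov_map
    (T (matrix_unit i0 j0) $ i0 $ j0) (T (matrix_unit i0 j0) $ j0 $ i0)
    (T (matrix_unit i0 i0) $ i0 $ i0) (T (matrix_unit i0 i0) $ j0 $ j0) (matrix_unit i j) $ p $ q"
  using covariant_off_diagonal_unit[OF _ assms, of i j p q] covariant_diagonal_unit[OF assms, of i p q]
  unfolding orth_cov_map_matrix_unit by (cases "i = j") auto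

lemma covariant_eq_orth_cov_map:
  assumes "i0 \<noteq> j0"
  shows "T = orth_cov_map
    (T (matrix_unit i0 j0) $ i0 $ j0) (T (matrix_unit i0 j0) $ j0 $ i0)
    (T (matrix_unit i0 i0) $ i0 $ i0) (T (matrix_unit i0 i0) $ j0 $ j0)"
proof (rule clinear_map_eqI[OF lin clinear_map_orth_cov_map])
  fix i j
  show "T (matrix_unit i j) = orth_cov_map
    (T (matrix_unit i0 j0) $ i0 $ j0) (T (matrix_unit i0 j0) $ j0 $ i0)
    (T (matrix_unit i0 i0) $ i0 $ i0) (T (matrix_unit i0 i0) $ j0 $ j0) (matrix_unit i j)"
    unfolding vec_eq_iff using covariant_matrix_unit_component[OF assms, of i j] by blast
qed

end

section \<open>Complete positivity\<close>

lemma cinner_matrix_unit_mult: "cinner w (matrix_unit a b *v x) = cnj (w $ a) * x $ b"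
proof -
  have "(matrix_unit a b *v x) $ c = (if c = a then x $ b else 0)" for c
    by (simp add: matrix_vector_mult_def if_distrib[of "\<lambda>t. t * _"] cong: if_cong)
  then show ?thesis
    by (simp add: cinner_def if_distrib[of "\<lambda>t. _ * t"] cong: if_cong)
qed

lemma block_psd_matrix_units: "block_psd k (\<lambda>i j. matrix_unit (u i) (u j) :: complex^'n^'n)"
  unfolding block_psd_def
proof
  fix v :: "nat \<Rightarrow> complex^'n"
  have "(\<Sum>i<k. \<Sum>j<k. cinner (v i) (matrix_unit (u i) (u j) *v v j))
      = cnj (\<Sum>i<k. v i $ u i) * (\<Sum>j<k. v j $ u j)"
    by (simp add: cinner_matrix_unit_mult sum_product)
  also have "\<dots> = of_real ((cmod (\<Sum>j<k. v j $ u j))\<^sup>2)"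
    unfolding complex_norm_square by (simp add: mult.commute)
  finally show "0 \<le> (\<Sum>i<k. \<Sum>j<k. cinner (v i) (matrix_unit (u i) (u j) *v v j))"
    by (simp add: less_eq_complex_def)
qed

lemma cinner_basis_vectors:
  "cinner (\<chi> a. if a = s then x else 0) (X *v (\<chi> a. if a = t then y else 0)) = cnj x * X $ s $ t * y"
proof -
  have "(X *v (\<chi> a. if a = t then y else 0)) $ c = X $ c $ t * y" for c
    by (simp add: matrix_vector_mult_def if_distrib[of "\<lambda>z. _ * z"] cong: if_cong)
  then show ?thesis
    by (simp add: cinner_def if_distrib[of cnj] if_distrib[of "\<lambda>z. z * _"] cong: if_cong)
qed

lemma completely_positive_matrix_unit_test:
  fixes T :: "complex^'n^'n \<Rightarrow> complex^'n^'n" and I :: "'a set"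
  assumes "completely_positive T" and "finite I"
  shows "0 \<le> (\<Sum>i\<in>I. \<Sum>j\<in>I. cnj (w i) * T (matrix_unit (u i) (u j)) $ t i $ t j * w j)"
proof -
  obtain h where h: "bij_betw h {..<card I} I"
    using ex_bij_betw_nat_finite[OF assms(2)] by (auto simp: atLeast0LessThan)
  have reindex: "(\<Sum>i<card I. \<Sum>j<card I. f (h i) (h j)) = (\<Sum>i\<in>I. \<Sum>j\<in>I. f i j)"
    for f :: "'a \<Rightarrow> 'a \<Rightarrow> complex"
  proof -
    have "(\<Sum>j<card I. f (h i) (h j)) = (\<Sum>j\<in>I. f (h i) j)" for i
      by (rule sum.reindex_bij_betw[OF h])
    then have "(\<Sum>i<card I. \<Sum>j<card I. f (h i) (h j)) = (\<Sum>i<card I. (\<lambda>i. \<Sum>j\<in>I. f i j) (h i))"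
      by simp
    also have "\<dots> = (\<Sum>i\<in>I. \<Sum>j\<in>I. f i j)"
      by (rule sum.reindex_bij_betw[OF h])
    finally show ?thesis .
  qed
  have "block_psd (card I) (\<lambda>i j. T (matrix_unit (u (h i)) (u (h j))))"
    using assms(1)[unfolded completely_positive_def, rule_format, OF block_psd_matrix_units] .
  from this[unfolded block_psd_def, rule_format, of "\<lambda>i. \<chi> a. if a = t (h i) then w (h i) else 0"]
  show ?thesis
    unfolding cinner_basis_vectors reindex[of "\<lambda>i j. cnj (w i) * T (matrix_unit (u i) (u j)) $ t i $ t j * w j"] .
qed

lemma orth_cov_map_coefficients:
  fixes A B C0 C1 :: complex and i0 j0 :: "'n::finite"
  assumes cp: "completely_positive (orth_cov_map A B C0 C1 :: complex^'n^'n \<Rightarrow> complex^'n^'n)"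
    and "i0 \<noteq> j0"
  shows "A \<in> \<real>" and "B \<in> \<real>" and "C0 \<in> \<real>" and "C1 \<in> \<real>"
    and "Re A \<le> Re C0" and "0 \<le> Re C0 + real (CARD('n) - 1) * Re A" and "\<bar>Re B\<bar> \<le> Re C1"
proof -
  \<comment> \<open>Positivity of the Choi matrix at \<open>|i0 i0\<rangle> - |j0 j0\<rangle>\<close>, \<open>|i0 j0\<rangle> \<plusminus> |j0 i0\<rangle>\<close> and \<open>\<Sum>\<^sub>x |x x\<rangle>\<close>.\<close>
  note test = completely_positive_matrix_unit_test[OF cp finite]
  let ?u = "\<lambda>b::bool. if b then i0 else j0"
  have "0 \<le> 2 * C0 - 2 * A"
    using test[where I = UNIV and u = ?u and t = ?u and w = "\<lambda>b. if b then 1 else -1"] assms(2)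
    by (simp add: UNIV_bool orth_cov_map_matrix_unit)
  then have A_C0: "Re A \<le> Re C0" "Im A = Im C0"
    by (auto simp: less_eq_complex_def)
  have "0 \<le> 2 * C1 + 2 * s * B" if "s = 1 \<or> s = -1" for s
    using test[where I = UNIV and u = ?u and t = "\<lambda>b. ?u (\<not> b)" and w = "\<lambda>b. if b then 1 else s"] assms(2) that
    by (auto simp: UNIV_bool orth_cov_map_matrix_unit add.commute)
  from this[of 1] this[of "-1"] have B_C1: "\<bar>Re B\<bar> \<le> Re C1" "Im B = 0" "Im C1 = 0"
    by (auto simp: less_eq_complex_def)
  have "0 \<le> of_nat CARD('n) * (C0 + of_nat (CARD('n) - 1) * A)"
    using test[where I = UNIV and u = id and t = id and w = "\<lambda>_. 1"]
    by (simp add: orth_cov_map_matrix_unit_row_sum)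
  then have "0 \<le> Re C0 + real (CARD('n) - 1) * Re A" "Im C0 + real (CARD('n) - 1) * Im A = 0"
    by (auto simp: less_eq_complex_def zero_le_mult_iff)
  with A_C0 have "Im A = 0" "Im C0 = 0"
    by (auto simp: algebra_simps)
  with A_C0 B_C1 \<open>0 \<le> Re C0 + real (CARD('n) - 1) * Re A\<close>
  show "A \<in> \<real>" "B \<in> \<real>" "C0 \<in> \<real>" "C1 \<in> \<real>"
    and "Re A \<le> Re C0" "0 \<le> Re C0 + real (CARD('n) - 1) * Re A" "\<bar>Re B\<bar> \<le> Re C1"
    by (simp_all add: complex_is_Real_iff)
qed

lemma orth_cov_map_decomposition:
  "orth_cov_map (of_real a) (of_real b) (of_real c0) (of_real c1) \<rho> =
     dephased_map c0 a \<rho> + pair_exchange_map ((c1 + b) / 2) 1 \<rho> + pair_exchange_map ((c1 - b) / 2) (-1) \<rho>"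
  by (simp add: vec_eq_iff orth_cov_map_def dephased_map_def pair_exchange_map_def field_simps)

lemma unitary_mixture_orth_cov_map:
  fixes a b c0 c1 :: real
  assumes "even CARD('n)" and "a \<le> c0" and "0 \<le> c0 + real (CARD('n) - 1) * a" and "\<bar>b\<bar> \<le> c1"
  shows "unitary_mixture (c0 + real (CARD('n) - 1) * c1)
    (orth_cov_map (of_real a) (of_real b) (of_real c0) (of_real c1) :: complex^'n^'n \<Rightarrow> complex^'n^'n)"
proof -
  define n where "n = CARD('n) - 1"
  have card: "CARD('n) = Suc n"
    by (simp add: n_def)
  obtain e :: "'n \<Rightarrow> nat" where "bij_betw e UNIV {..n}"
    using ex_bij_betw_finite_nat[of "UNIV :: 'n set"] by (auto simp: card atLeast0LessThan lessThan_Suc_atMost)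
  moreover have "odd n"
    using assms(1) by (simp add: card)
  ultimately interpret odd_enumeration e n
    by unfold_locales
  have "unitary_mixture c0 (dephased_map c0 a :: complex^'n^'n \<Rightarrow> complex^'n^'n)"
    by (rule unitary_mixture_dephasing) (use assms in \<open>simp_all add: n_def\<close>)
  moreover have "unitary_mixture (real n * ((c1 + b) / 2))
      (pair_exchange_map ((c1 + b) / 2) 1 :: complex^'n^'n \<Rightarrow> complex^'n^'n)"
    by (rule unitary_mixture_pair_exchange) (use assms in auto)
  moreover have "unitary_mixture (real n * ((c1 - b) / 2))
      (pair_exchange_map ((c1 - b) / 2) (-1) :: complex^'n^'n \<Rightarrow> complex^'n^'n)"
    by (rule unitary_mixture_pair_exchange) (use assms in auto)
  ultimately have "unitary_mixture (c0 + real n * ((c1 + b) / 2) + real n * ((c1 - b) / 2))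
      (\<lambda>\<rho> :: complex^'n^'n. dephased_map c0 a \<rho> + pair_exchange_map ((c1 + b) / 2) 1 \<rho>
        + pair_exchange_map ((c1 - b) / 2) (-1) \<rho>)"
    by (intro unitary_mixture_add)
  moreover have "c0 + real n * ((c1 + b) / 2) + real n * ((c1 - b) / 2) = c0 + real (CARD('n) - 1) * c1"
    by (simp add: n_def field_simps)
  ultimately show ?thesis
    by (simp only: orth_cov_map_decomposition[abs_def])
qed

lemma ex_two_elements_if_even_card:
  assumes "even CARD('n::finite)"
  obtains i j :: "'n::finite" where "i \<noteq> j"
proof -
  have "CARD('n) \<noteq> Suc 0"
    using assms by auto
  then have "UNIV \<noteq> {undefined :: 'n}"
    using card_1_singleton_iff[of "UNIV :: 'n set"] by blast
  with that show thesis
    by blast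
qed

theorem theorem4:
  fixes T :: "complex^'n^'n \<Rightarrow> complex^'n^'n"
  assumes "even CARD('n)"
    and "quantum_channel T"
    and "\<And>\<rho> Q. real_orthogonal Q \<Longrightarrow> T (Q ** \<rho> ** transpose Q) = Q ** T \<rho> ** transpose Q"
  shows "\<exists>m (p :: nat \<Rightarrow> real) U. (\<forall>i<m. 0 \<le> p i \<and> cunitary (U i)) \<and> (\<Sum>i<m. p i) = 1 \<and>
           (\<forall>\<rho>. T \<rho> = (\<Sum>i<m. cmat_scale (complex_of_real (p i)) (U i ** \<rho> ** cmat_adj (U i))))"
proof -
  have lin: "clinear_map T" and cp: "completely_positive T" and tp: "trace_preserving T"
    using assms(2) by (auto simp: quantum_channel_def)
  obtain i0 j0 :: 'n where "i0 \<noteq> j0"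
    using ex_two_elements_if_even_card[OF assms(1)] .
  then obtain A B C0 C1 where T_eq: "T = orth_cov_map A B C0 C1"
    using covariant_eq_orth_cov_map[OF lin assms(3)] by blast
  note coefficients = orth_cov_map_coefficients[OF cp[unfolded T_eq] \<open>i0 \<noteq> j0\<close>]
  from tp have "C0 + of_nat (CARD('n) - 1) * C1 = 1"
    unfolding T_eq trace_preserving_orth_cov_map .
  then have "Re (C0 + of_nat (CARD('n) - 1) * C1) = 1"
    by simp
  then have "Re C0 + real (CARD('n) - 1) * Re C1 = 1"
    using coefficients(4) by (simp add: complex_is_Real_iff)
  with unitary_mixture_orth_cov_map[OF assms(1) coefficients(5-7)] have "unitary_mixture 1 T"
    unfolding T_eq using coefficients(1-4) by (simp add: of_real_Re)
  then show ?thesis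
    by (simp add: unitary_mixture_def fun_eq_iff)
qed

end
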